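(* Assume (H1)–(H5) and (H4)$_{st}$. Let $u\in C(\mathbb{R}^n\times[0,T))$ be a viscosity solution of (1.1)–(1.2). Let $(x,t)\in\mathbb{R}^n\times(0,T)$ be a point where $u$ is differentiable and let $(\xi,\eta,u_\xi)\in C^1([0,t];\mathbb{R}^n\times\mathbb{R}^n\times\mathbb{R})$ solve the Lie equation on $[0,t]$ with terminal condition $\xi(t)=x$, $\eta(t)=D_xu(x,t)$, $u_\xi(t)=u(x,t)$. Then: If $(C_1,K_3)\ne(0,0)$, $$|D_xu(x,t)-\eta(0)|\le\Big(\frac{C_1\beta}{C_1+K_3}+|D_xu(x,t)|\Big)(e^{(C_1+K_3)t}-1),\qquad |D_xu(x,t)-\eta(0)|\le\Big(\frac{C_1\beta}{C_1+K_3}+|\eta(0)|\Big)(e^{(C_1+K_3)t}-1),$$ and consequently $$|\eta(0)|e^{-(C_1+K_3)t}-\frac{C_1\beta}{C_1+K_3}(1-e^{-(C_1+K_3)t})\le|D_xu(x,t)|\le|\eta(0)|e^{(C_1+K_3)t}+\frac{C_1\beta}{C_1+K_3}(e^{(C_1+K_3)t}-1).$$ Moreover: if $K_3=0$, $|\eta(0)|e^{-C_1t}-\beta(1-e^{-C_1t})\le|D_xu(x,t)|\le|\eta(0)|e^{C_1t}+\beta(e^{C_1t}-1)$; if $\beta=0$, $|\eta(0)|e^{-(C_1+K_3)t}\le|D_xu(x,t)|\le|\eta(0)|e^{(C_1+K_3)t}$; if $C_1=0$, $|\eta(0)|e^{-K_3t}\le|D_xu(x,t)|\le|\eta(0)|e^{K_3t}$;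 if $(C_1,K_3)=(0,0)$, $D_xu(x,t)=\eta(0)$.
   Context: $T>0$; $H:\mathbb{R}^n\times[0,T]\times\mathbb{R}\times\mathbb{R}^n\to\mathbb{R}$ continuous; $u_0$ Lipschitz. Problem (1.1)–(1.2): $u_t+H(x,t,u,D_xu)=0$ in $\mathbb{R}^n\times(0,T)$, $u(x,0)=u_0(x)$. (H1) there exist $C_1\ge0$, $\beta\in\{0,1\}$ with $|H(x,t,u,p)-H(y,t,u,p)|\le C_1(\beta+|p|)|x-y|$. (H2) there exist $A_2,B_2\ge0$ with $|H(x,t,u,p)-H(x,t,u,q)|\le(A_2|x|+B_2)|p-q|$. (H3) there exists $K_3\ge0$ with $|H(x,t,u,p)-H(x,t,v,p)|\le K_3|u-v|$. (H4) $p\mapsto H(x,t,u,p)$ convex. (H5) $H\in C^2(\mathbb{R}^n\times[0,T]\times\mathbb{R}\times\mathbb{R}^n)$. (H4)$_{st}$ $D_{pp}H(x,t,u,p)$ is positive definite everywhere. Viscosity solution: $u\in C(\mathbb{R}^n\times[0,T))$, $u(\cdot,0)=u_0$, and for every $\phi\in C^1(\mathbb{R}^n\times(0,T))$, if $u-\phi$ has a local max (resp. min) at $(x,t)\in\mathbb{R}^n\times(0,T)$ then $\phi_t+H(x,t,u(x,t),D_x\phi(x,t))\le0$ (resp. $\ge0$). Lie equation: $\xi'(s)=D_pH(\xi(s),s,u_\xi(s),\eta(s))$, $\eta'(s)=-D_xH(\xi(s),s,u_\xi(s),\eta(s))-D_uH(\xi(s),s,u_\xi(s),\eta(s))\eta(s)$,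 $u_\xi'(s)=\langle\eta(s),\xi'(s)\rangle-H(\xi(s),s,u_\xi(s),\eta(s))$. *)

theory Defs
  imports "HOL-Analysis.Analysis"
begin

definition grad :: "('a::euclidean_space \<Rightarrow> real) \<Rightarrow> 'a \<Rightarrow> 'a" where
  "grad f x = (THE v. (f has_derivative (\<lambda>h. v \<bullet> h)) (at x))"

definition C1_on :: "('a::real_normed_vector \<Rightarrow> real) \<Rightarrow> 'a set \<Rightarrow> bool" where
  "C1_on f S \<longleftrightarrow> (\<exists>f'. (\<forall>z\<in>S. (f has_derivative blinfun_apply (f' z)) (at z within S))
                       \<and> continuous_on S f')"

definition C2_on :: "('a::real_normed_vector \<Rightarrow> real) \<Rightarrow> 'a set \<Rightarrow> bool" where
  "C2_on f S \<longleftrightarrow> (\<exists>f' f''. (\<forall>z\<in>S. (f has_derivative blinfun_apply (f' z)) (at z within S))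
                       \<and> (\<forall>z\<in>S. (f' has_derivative blinfun_apply (f'' z)) (at z within S))
                       \<and> continuous_on S f'')"

definition DxH :: "('a::euclidean_space \<Rightarrow> real \<Rightarrow> real \<Rightarrow> 'a \<Rightarrow> real) \<Rightarrow> 'a \<Rightarrow> real \<Rightarrow> real \<Rightarrow> 'a \<Rightarrow> 'a" where
  "DxH H x t u p = grad (\<lambda>y. H y t u p) x"
definition DpH :: "('a::euclidean_space \<Rightarrow> real \<Rightarrow> real \<Rightarrow> 'a \<Rightarrow> real) \<Rightarrow> 'a \<Rightarrow> real \<Rightarrow> real \<Rightarrow> 'a \<Rightarrow> 'a" where
  "DpH H x t u p = grad (\<lambda>q. H x t u q) p"
definition DuH :: "('a::euclidean_space \<Rightarrow> real \<Rightarrow> real \<Rightarrow> 'a \<Rightarrow> real) \<Rightarrow> 'a \<Rightarrow> real \<Rightarrow> real \<Rightarrow> 'a \<Rightarrow> real" where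
  "DuH H x t u p = deriv (\<lambda>v. H x t v p) u"

definition DppH_pos_def :: "('a::euclidean_space \<Rightarrow> real \<Rightarrow> real \<Rightarrow> 'a \<Rightarrow> real) \<Rightarrow> 'a \<Rightarrow> real \<Rightarrow> real \<Rightarrow> 'a \<Rightarrow> bool" where
  "DppH_pos_def H x t u p \<longleftrightarrow>
     (\<exists>L. ((\<lambda>q. DpH H x t u q) has_derivative L) (at p) \<and> (\<forall>v. v \<noteq> 0 \<longrightarrow> v \<bullet> L v > 0))"

definition viscosity_solution ::
  "('a::euclidean_space \<Rightarrow> real \<Rightarrow> real \<Rightarrow> 'a \<Rightarrow> real) \<Rightarrow> real \<Rightarrow> ('a \<Rightarrow> real) \<Rightarrow> ('a \<Rightarrow> real \<Rightarrow> real) \<Rightarrow> bool" where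
  "viscosity_solution H T u0 u \<longleftrightarrow>
     continuous_on (UNIV \<times> {0..<T}) (\<lambda>z. u (fst z) (snd z)) \<and>
     (\<forall>x. u x 0 = u0 x) \<and>
     (\<forall>\<phi> x t. C1_on (\<lambda>z. \<phi> (fst z) (snd z)) (UNIV \<times> {0<..<T}) \<and> t \<in> {0<..<T} \<longrightarrow>
        ((\<exists>e>0. \<forall>y s. s \<in> {0<..<T} \<and> dist (y, s) (x, t) < e \<longrightarrow> u y s - \<phi> y s \<le> u x t - \<phi> x t) \<longrightarrow>
            deriv (\<lambda>s. \<phi> x s) t + H x t (u x t) (grad (\<lambda>y. \<phi> y t) x) \<le> 0) \<and>
        ((\<exists>e>0. \<forall>y s. s \<in> {0<..<T} \<and> dist (y, s) (x, t) < e \<longrightarrow> u y s - \<phi> y s \<ge> u x t - \<phi> x t) \<longrightarrow>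
            deriv (\<lambda>s. \<phi> x s) t + H x t (u x t) (grad (\<lambda>y. \<phi> y t) x) \<ge> 0))"

definition lie_solution ::
  "('a::euclidean_space \<Rightarrow> real \<Rightarrow> real \<Rightarrow> 'a \<Rightarrow> real) \<Rightarrow> real \<Rightarrow> (real \<Rightarrow> 'a) \<Rightarrow> (real \<Rightarrow> 'a) \<Rightarrow> (real \<Rightarrow> real) \<Rightarrow> bool" where
  "lie_solution H t \<xi> \<eta> u\<xi> \<longleftrightarrow>
     (\<forall>s\<in>{0..t}.
        (\<xi> has_vector_derivative DpH H (\<xi> s) s (u\<xi> s) (\<eta> s)) (at s within {0..t}) \<and>
        (\<eta> has_vector_derivative
            (- DxH H (\<xi> s) s (u\<xi> s) (\<eta> s) - DuH H (\<xi> s) s (u\<xi> s) (\<eta> s) *\<^sub>R \<eta> s)) (at s within {0..t}) \<and>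
        (u\<xi> has_vector_derivative
            (\<eta> s \<bullet> DpH H (\<xi> s) s (u\<xi> s) (\<eta> s) - H (\<xi> s) s (u\<xi> s) (\<eta> s))) (at s within {0..t}))"

end

theory Submission
  imports Defs
begin

text \<open>Along a characteristic the costate satisfies \<open>\<eta>' = - D\<^sub>xH - D\<^sub>uH \<eta>\<close>. By (H1) and (H3)
  the partial derivatives obey \<open>|D\<^sub>xH| \<le> C\<^sub>1 (\<beta> + |p|)\<close> and \<open>|D\<^sub>uH| \<le> K\<^sub>3\<close>, so
  \<open>|\<eta>'| \<le> a (c + |\<eta>|)\<close> with \<open>a = C\<^sub>1 + K\<^sub>3\<close> and \<open>c = C\<^sub>1 \<beta> / a\<close>. Gronwall's inequality for
  \<open>c + |\<eta>|\<close>, run forward and backward in time, compares \<open>|\<eta> 0|\<close> with \<open>|\<eta> t| = |D\<^sub>xu(x,t)|\<close>;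
  applied to \<open>\<eta> - \<eta> 0\<close> and \<open>\<eta> - \<eta> t\<close> it bounds their difference. Only the costate equation
  and its terminal value enter.\<close>

lemma grad_eqI:
  assumes "(f has_derivative (\<lambda>h. v \<bullet> h)) (at x)"
  shows "grad f x = v"
  unfolding grad_def
proof (rule the_equality)
  fix w assume "(f has_derivative (\<lambda>h. w \<bullet> h)) (at x)"
  from has_derivative_unique[OF this assms] have "(w - v) \<bullet> (w - v) = 0"
    by (metis inner_diff_left right_minus_eq)
  then show "w = v" by simp
qed (fact assms)

lemma abs_derivative_le_of_Lipschitz:
  fixes f :: "'a::real_normed_vector \<Rightarrow> real"
  assumes f': "(f has_derivative D) (at x)"
    and Lip: "\<And>y. \<bar>f y - f x\<bar> \<le> K * norm (y - x)"
  shows "\<bar>D h\<bar> \<le> K * norm h"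
proof -
  have "((\<lambda>r::real. x + r *\<^sub>R h) has_derivative (\<lambda>r. r *\<^sub>R h)) (at 0)"
    by (auto intro!: derivative_eq_intros)
  from has_derivative_compose[OF this] f'
  have "((\<lambda>r. f (x + r *\<^sub>R h)) has_derivative (\<lambda>r. D (r *\<^sub>R h))) (at 0)" by simp
  moreover have "(\<lambda>r. D (r *\<^sub>R h)) = (\<lambda>r. D h * r)"
    using linear_scale[OF has_derivative_linear[OF f']] by (auto simp: mult.commute)
  ultimately have "((\<lambda>r. f (x + r *\<^sub>R h)) has_real_derivative D h) (at 0)"
    by (simp add: has_field_derivative_def)
  then have "((\<lambda>r. \<bar>(f (x + r *\<^sub>R h) - f x) / r\<bar>) \<longlongrightarrow> \<bar>D h\<bar>) (at 0)"
    by (intro tendsto_rabs) (simp add: has_field_derivative_iff)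
  moreover have "\<bar>(f (x + r *\<^sub>R h) - f x) / r\<bar> \<le> K * norm h" if "r \<noteq> 0" for r
    using Lip[of "x + r *\<^sub>R h"] that by (simp add: divide_le_eq mult_ac)
  ultimately show ?thesis
    by (intro tendsto_upperbound) (auto simp: eventually_at_filter)
qed

lemma norm_grad_le_of_Lipschitz:
  fixes f :: "'a::euclidean_space \<Rightarrow> real"
  assumes "f differentiable (at x)"
    and Lip: "\<And>y. \<bar>f y - f x\<bar> \<le> K * norm (y - x)"
  shows "norm (grad f x) \<le> K"
proof -
  obtain D where f': "(f has_derivative D) (at x)"
    using assms(1) unfolding differentiable_def by blast
  define v where "v = adjoint D 1"
  have D: "D = (\<lambda>h. v \<bullet> h)"
    using adjoint_works[OF has_derivative_linear[OF f'], of _ 1] by (auto simp: v_def inner_commute)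
  have "norm v * norm v \<le> K * norm v"
    using abs_derivative_le_of_Lipschitz[OF f' Lip, of v] by (simp add: D norm_eq_sqrt_inner)
  moreover have "K \<ge> 0"
  proof -
    obtain b :: 'a where "b \<in> Basis" using nonempty_Basis by blast
    then have "\<bar>f (x + b) - f x\<bar> \<le> K" using Lip[of "x + b"] by (simp add: norm_Basis)
    then show ?thesis by (rule order_trans[OF abs_ge_zero])
  qed
  ultimately have "norm v \<le> K"
    by (metis mult_right_le_imp_le norm_ge_zero order_le_less)
  then show ?thesis
    using grad_eqI[OF f'[unfolded D]] by simp
qed

lemma abs_deriv_le_of_Lipschitz:
  fixes f :: "real \<Rightarrow> real"
  assumes "f differentiable (at x)"
    and Lip: "\<And>y. \<bar>f y - f x\<bar> \<le> K * \<bar>y - x\<bar>"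
  shows "\<bar>deriv f x\<bar> \<le> K"
proof -
  have "(f has_derivative (\<lambda>h. deriv f x * h)) (at x)"
    using assms(1) DERIV_deriv_iff_real_differentiable has_field_derivative_def by blast
  from abs_derivative_le_of_Lipschitz[OF this, of K 1] Lip show ?thesis by simp
qed

lemma C2_on_differentiable_partials:
  fixes H :: "'a::euclidean_space \<Rightarrow> real \<Rightarrow> real \<Rightarrow> 'a \<Rightarrow> real"
  assumes "C2_on (\<lambda>(x, t, u, p). H x t u p) (UNIV \<times> {0..T} \<times> UNIV \<times> UNIV)" and "s \<in> {0..T}"
  shows "(\<lambda>y. H y s u p) differentiable (at x)" "(\<lambda>v. H x s v p) differentiable (at u)"
proof -
  let ?S = "(UNIV :: 'a set) \<times> {0..T} \<times> (UNIV :: real set) \<times> (UNIV :: 'a set)"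
  obtain H' where H': "\<And>z. z \<in> ?S \<Longrightarrow>
      ((\<lambda>(x, t, u, p). H x t u p) has_derivative blinfun_apply (H' z)) (at z within ?S)"
    using assms(1) unfolding C2_on_def by blast
  have "((\<lambda>y. (y, s, u, p)) has_derivative (\<lambda>h. (h, 0, 0, 0))) (at x)"
    by (auto intro!: derivative_eq_intros simp: zero_prod_def)
  from has_derivative_in_compose2[OF H' _ _ this] assms(2)
  show "(\<lambda>y. H y s u p) differentiable (at x)"
    unfolding differentiable_def by fastforce
  have "((\<lambda>v. (x, s, v, p)) has_derivative (\<lambda>h. (0, 0, h, 0))) (at u)"
    by (auto intro!: derivative_eq_intros simp: zero_prod_def)
  from has_derivative_in_compose2[OF H' _ _ this] assms(2)
  show "(\<lambda>v. H x s v p) differentiable (at u)"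
    unfolding differentiable_def by fastforce
qed

lemma DxH_DuH_bounds:
  fixes H :: "'a::euclidean_space \<Rightarrow> real \<Rightarrow> real \<Rightarrow> 'a \<Rightarrow> real"
  assumes H5: "C2_on (\<lambda>(x, t, u, p). H x t u p) (UNIV \<times> {0..T} \<times> UNIV \<times> UNIV)"
    and H1: "\<And>x y t u p. t \<in> {0..T} \<Longrightarrow> \<bar>H x t u p - H y t u p\<bar> \<le> C\<^sub>1 * (\<beta> + norm p) * norm (x - y)"
    and H3: "\<And>x t u v p. t \<in> {0..T} \<Longrightarrow> \<bar>H x t u p - H x t v p\<bar> \<le> K\<^sub>3 * \<bar>u - v\<bar>"
    and s: "s \<in> {0..T}"
  shows "norm (DxH H x s u p) \<le> C\<^sub>1 * (\<beta> + norm p)" "\<bar>DuH H x s u p\<bar> \<le> K\<^sub>3"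
proof -
  show "norm (DxH H x s u p) \<le> C\<^sub>1 * (\<beta> + norm p)"
    unfolding DxH_def using H1[OF s] C2_on_differentiable_partials(1)[OF H5 s]
    by (intro norm_grad_le_of_Lipschitz) (auto simp: abs_minus_commute)
  show "\<bar>DuH H x s u p\<bar> \<le> K\<^sub>3"
    unfolding DuH_def using H3[OF s] C2_on_differentiable_partials(2)[OF H5 s]
    by (intro abs_deriv_le_of_Lipschitz) (auto simp: abs_minus_commute)
qed

text \<open>The norm is not differentiable where \<open>F\<close> vanishes, so the Gronwall argument is run on
  \<open>sqrt (\<delta> + |F|\<^sup>2)\<close> and \<open>\<delta> \<rightarrow> 0\<close> is taken at the end.\<close>

lemma regularized_norm_has_real_derivative:
  fixes F :: "real \<Rightarrow> 'a::real_inner"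
  assumes "(F has_vector_derivative V) (at r)" and "\<delta> > 0"
  shows "((\<lambda>r. sqrt (\<delta> + F r \<bullet> F r)) has_real_derivative (F r \<bullet> V) / sqrt (\<delta> + F r \<bullet> F r)) (at r)"
proof -
  have F': "(F has_derivative (\<lambda>h. h *\<^sub>R V)) (at r)"
    using assms(1) by (simp add: has_vector_derivative_def)
  have "(\<lambda>h. F r \<bullet> (h *\<^sub>R V) + (h *\<^sub>R V) \<bullet> F r) = (\<lambda>h. 2 * (F r \<bullet> V) * h)"
    by (auto simp: inner_commute algebra_simps)
  with has_derivative_inner[OF F' F']
  have "((\<lambda>r. F r \<bullet> F r) has_real_derivative 2 * (F r \<bullet> V)) (at r)"
    by (simp add: has_field_derivative_def)
  moreover have "0 < \<delta> + F r \<bullet> F r" using assms(2) by (simp add: add_pos_nonneg)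
  ultimately show ?thesis
    by (auto intro!: derivative_eq_intros simp: field_simps)
qed

locale affine_growth =
  fixes F F' :: "real \<Rightarrow> 'a::real_inner" and a c t :: real
  assumes a: "a \<ge> 0" and c: "c \<ge> 0" and t: "t \<ge> 0"
    and F': "\<And>r. r \<in> {0..t} \<Longrightarrow> (F has_vector_derivative F' r) (at r within {0..t})"
    and F'_le: "\<And>r. r \<in> {0..t} \<Longrightarrow> norm (F' r) \<le> a * (c + norm (F r))"
begin

lemma regularized_norm_exp_growth:
  assumes "\<delta> > 0"
  defines "N \<equiv> \<lambda>r. sqrt (\<delta> + F r \<bullet> F r)"
  shows "c + N t \<le> exp (a * t) * (c + N 0)"
proof -
  have norm_le_N: "norm (F r) \<le> N r" for r
    unfolding N_def using assms(1)
    by (simp add: norm_eq_sqrt_inner)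
  have "exp (- a * t) * (c + N t) \<le> exp (- a * 0) * (c + N 0)"
  proof (rule DERIV_nonpos_imp_decreasing_open[OF t])
    fix r assume r: "0 < r" "r < t"
    have "(F has_vector_derivative F' r) (at r within {0..t})" using F' r by simp
    moreover have "at r within {0..t} = at r" using r by (intro at_within_interior) auto
    ultimately have "(F has_vector_derivative F' r) (at r)" by simp
    from regularized_norm_has_real_derivative[OF this assms(1)]
    have "(N has_real_derivative F r \<bullet> F' r / N r) (at r)" unfolding N_def .
    then have "((\<lambda>r. exp (- a * r) * (c + N r)) has_real_derivative
        exp (- a * r) * (F r \<bullet> F' r / N r - a * (c + N r))) (at r)"
      by (auto intro!: derivative_eq_intros simp: algebra_simps)
    moreover have "F r \<bullet> F' r / N r \<le> a * (c + N r)"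
    proof -
      have "N r > 0" unfolding N_def using assms(1) by (simp add: add_pos_nonneg)
      moreover have "F r \<bullet> F' r \<le> N r * (a * (c + N r))"
      proof -
        have "F r \<bullet> F' r \<le> norm (F r) * norm (F' r)" by (rule norm_cauchy_schwarz)
        also have "\<dots> \<le> N r * (a * (c + N r))"
        proof (rule mult_mono)
          have "a * (c + norm (F r)) \<le> a * (c + N r)"
            using a norm_le_N[of r] by (simp add: mult_left_mono)
          then show "norm (F' r) \<le> a * (c + N r)" using F'_le[of r] r by simp
        qed (use norm_le_N[of r] order_trans[OF norm_ge_zero norm_le_N[of r]] in auto)
        finally show ?thesis .
      qed
      ultimately show ?thesis by (simp add: divide_le_eq mult.commute)
    qed
    ultimately show "\<exists>y. ((\<lambda>r. exp (- a * r) * (c + N r)) has_real_derivative y) (at r) \<and> y \<le> 0"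
      by (intro exI conjI) (auto simp: mult_nonneg_nonpos)
  next
    have "continuous_on {0..t} F" using F' continuous_on_vector_derivative by blast
    then show "continuous_on {0..t} (\<lambda>r. exp (- a * r) * (c + N r))"
      unfolding N_def by (auto intro!: continuous_intros)
  qed
  then have "exp (a * t) * (exp (- a * t) * (c + N t)) \<le> exp (a * t) * (c + N 0)"
    by simp
  then show ?thesis by (simp add: mult.assoc[symmetric] exp_minus_inverse)
qed

lemma norm_exp_growth: "c + norm (F t) \<le> exp (a * t) * (c + norm (F 0))"
proof (rule field_le_epsilon)
  fix e :: real assume "e > 0"
  define \<delta> where "\<delta> = (e / exp (a * t))\<^sup>2"
  have \<delta>: "\<delta> > 0" using \<open>e > 0\<close> by (simp add: \<delta>_def)
  have "c + norm (F t) \<le> c + sqrt (\<delta> + F t \<bullet> F t)"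
    using \<delta> by (simp add: norm_eq_sqrt_inner)
  also have "\<dots> \<le> exp (a * t) * (c + sqrt (\<delta> + F 0 \<bullet> F 0))"
    by (rule regularized_norm_exp_growth[OF \<delta>])
  also have "sqrt (\<delta> + F 0 \<bullet> F 0) \<le> sqrt \<delta> + norm (F 0)"
    using sqrt_add_le_add_sqrt[of \<delta> "F 0 \<bullet> F 0"] \<delta> by (simp add: norm_eq_sqrt_inner less_imp_le)
  finally show "c + norm (F t) \<le> exp (a * t) * (c + norm (F 0)) + e"
    using \<open>e > 0\<close> by (simp add: \<delta>_def distrib_left algebra_simps)
qed

lemma norm_exp_growth_reverse: "c + norm (F 0) \<le> exp (a * t) * (c + norm (F t))"
proof -
  interpret reversed: affine_growth "\<lambda>r. F (t - r)" "\<lambda>r. - F' (t - r)" a c t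
  proof
    fix r assume r: "r \<in> {0..t}"
    have "((\<lambda>r. t - r) has_vector_derivative -1) (at r within {0..t})"
      by (auto intro!: derivative_eq_intros)
    moreover have "(\<lambda>r. t - r) ` {0..t} = {0..t}"
      by (auto simp: image_iff intro!: bexI[of _ "t - _"])
    ultimately show "((\<lambda>r. F (t - r)) has_vector_derivative - F' (t - r)) (at r within {0..t})"
      using vector_diff_chain_within[of "\<lambda>r. t - r" "-1" r "{0..t}" F] F'[of "t - r"] r
      by (simp add: o_def)
    show "norm (- F' (t - r)) \<le> a * (c + norm (F (t - r)))"
      using F'_le[of "t - r"] r by simp
  qed (use a c t in auto)
  show ?thesis using reversed.norm_exp_growth by simp
qed

lemma norm_exp_decay: "exp (- a * t) * (c + norm (F 0)) \<le> c + norm (F t)"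
proof -
  have "exp (- a * t) * (c + norm (F 0)) \<le> exp (- a * t) * (exp (a * t) * (c + norm (F t)))"
    using norm_exp_growth_reverse by simp
  then show ?thesis by (simp add: mult.assoc[symmetric] exp_minus_inverse mult.commute[of "exp (- _)"])
qed

lemma norm_diff_exp_growth:
  shows "norm (F t - F 0) \<le> (c + norm (F 0)) * (exp (a * t) - 1)"
    and "norm (F t - F 0) \<le> (c + norm (F t)) * (exp (a * t) - 1)"
proof -
  have shifted: "affine_growth (\<lambda>r. F r - v) F' a (c + norm v) t" for v
  proof
    fix r assume r: "r \<in> {0..t}"
    show "((\<lambda>r. F r - v) has_vector_derivative F' r) (at r within {0..t})"
      using F'[OF r] by (auto intro!: derivative_eq_intros)
    have "a * (c + norm (F r)) \<le> a * (c + norm v + norm (F r - v))"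
      using a norm_triangle_sub[of "F r" v] by (intro mult_left_mono) auto
    then show "norm (F' r) \<le> a * (c + norm v + norm (F r - v))"
      using F'_le[OF r] by simp
  qed (use a c t in auto)
  show "norm (F t - F 0) \<le> (c + norm (F 0)) * (exp (a * t) - 1)"
    using affine_growth.norm_exp_growth[OF shifted[of "F 0"]] by (simp add: algebra_simps)
  show "norm (F t - F 0) \<le> (c + norm (F t)) * (exp (a * t) - 1)"
    using affine_growth.norm_exp_growth_reverse[OF shifted[of "F t"]]
    by (simp add: algebra_simps norm_minus_commute)
qed

end

lemma lie_solution_costate_affine_growth:
  fixes H :: "'a::euclidean_space \<Rightarrow> real \<Rightarrow> real \<Rightarrow> 'a \<Rightarrow> real"
  assumes H5: "C2_on (\<lambda>(x, t, u, p). H x t u p) (UNIV \<times> {0..T} \<times> UNIV \<times> UNIV)"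
    and H1: "C\<^sub>1 \<ge> 0" "\<beta> \<ge> 0"
      "\<And>x y t u p. t \<in> {0..T} \<Longrightarrow> \<bar>H x t u p - H y t u p\<bar> \<le> C\<^sub>1 * (\<beta> + norm p) * norm (x - y)"
    and H3: "K\<^sub>3 \<ge> 0" "\<And>x t u v p. t \<in> {0..T} \<Longrightarrow> \<bar>H x t u p - H x t v p\<bar> \<le> K\<^sub>3 * \<bar>u - v\<bar>"
    and lie: "lie_solution H t \<xi> \<eta> u\<xi>" and t: "0 \<le> t" "t \<le> T"
  shows "affine_growth \<eta>
    (\<lambda>s. - DxH H (\<xi> s) s (u\<xi> s) (\<eta> s) - DuH H (\<xi> s) s (u\<xi> s) (\<eta> s) *\<^sub>R \<eta> s)
    (C\<^sub>1 + K\<^sub>3) (C\<^sub>1 * \<beta> / (C\<^sub>1 + K\<^sub>3)) t"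
proof
  fix s assume s: "s \<in> {0..t}"
  then show "(\<eta> has_vector_derivative
      - DxH H (\<xi> s) s (u\<xi> s) (\<eta> s) - DuH H (\<xi> s) s (u\<xi> s) (\<eta> s) *\<^sub>R \<eta> s) (at s within {0..t})"
    using lie unfolding lie_solution_def by blast
  have sT: "s \<in> {0..T}" using s t by auto
  have "norm (- DxH H (\<xi> s) s (u\<xi> s) (\<eta> s) - DuH H (\<xi> s) s (u\<xi> s) (\<eta> s) *\<^sub>R \<eta> s)
      \<le> norm (DxH H (\<xi> s) s (u\<xi> s) (\<eta> s)) + \<bar>DuH H (\<xi> s) s (u\<xi> s) (\<eta> s)\<bar> * norm (\<eta> s)"
    by (metis norm_minus_cancel norm_scaleR norm_triangle_ineq4)
  also have "\<dots> \<le> C\<^sub>1 * (\<beta> + norm (\<eta> s)) + K\<^sub>3 * norm (\<eta> s)"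
    using DxH_DuH_bounds[OF H5 H1(3) H3(2) sT] by (intro add_mono mult_right_mono) auto
  also have "\<dots> = (C\<^sub>1 + K\<^sub>3) * (C\<^sub>1 * \<beta> / (C\<^sub>1 + K\<^sub>3) + norm (\<eta> s))"
    using H1(1) H3(1) by (cases "C\<^sub>1 = 0 \<and> K\<^sub>3 = 0") (auto simp: field_simps)
  finally show "norm (- DxH H (\<xi> s) s (u\<xi> s) (\<eta> s) - DuH H (\<xi> s) s (u\<xi> s) (\<eta> s) *\<^sub>R \<eta> s)
      \<le> (C\<^sub>1 + K\<^sub>3) * (C\<^sub>1 * \<beta> / (C\<^sub>1 + K\<^sub>3) + norm (\<eta> s))" .
qed (use H1 H3 t in auto)

theorem proposition4p1:
  fixes H :: "'a::euclidean_space \<Rightarrow> real \<Rightarrow> real \<Rightarrow> 'a \<Rightarrow> real"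
    and T C\<^sub>1 \<beta> K\<^sub>3 :: real
    and u0 :: "'a \<Rightarrow> real" and u :: "'a \<Rightarrow> real \<Rightarrow> real"
    and x :: 'a and t :: real
    and \<xi> \<eta> :: "real \<Rightarrow> 'a" and u\<xi> :: "real \<Rightarrow> real"
  assumes T_pos: "T > 0"
    and H_cont: "continuous_on (UNIV \<times> {0..T} \<times> UNIV \<times> UNIV) (\<lambda>(x, t, u, p). H x t u p)"
    and u0_lip: "\<exists>L. L-lipschitz_on UNIV u0"
    and H1: "C\<^sub>1 \<ge> 0" "\<beta> \<in> {0, 1}"
      "\<And>x y t u p. t \<in> {0..T} \<Longrightarrow> \<bar>H x t u p - H y t u p\<bar> \<le> C\<^sub>1 * (\<beta> + norm p) * norm (x - y)"
    and H2: "\<exists>A\<^sub>2 B\<^sub>2. A\<^sub>2 \<ge> 0 \<and> B\<^sub>2 \<ge> 0 \<and> (\<forall>x t u p q. t \<in> {0..T} \<longrightarrow>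
              \<bar>H x t u p - H x t u q\<bar> \<le> (A\<^sub>2 * norm x + B\<^sub>2) * norm (p - q))"
    and H3: "K\<^sub>3 \<ge> 0"
      "\<And>x t u v p. t \<in> {0..T} \<Longrightarrow> \<bar>H x t u p - H x t v p\<bar> \<le> K\<^sub>3 * \<bar>u - v\<bar>"
    and H4: "\<And>x t u. t \<in> {0..T} \<Longrightarrow> convex_on UNIV (\<lambda>p. H x t u p)"
    and H5: "C2_on (\<lambda>(x, t, u, p). H x t u p) (UNIV \<times> {0..T} \<times> UNIV \<times> UNIV)"
    and H4st: "\<And>x t u p. t \<in> {0..T} \<Longrightarrow> DppH_pos_def H x t u p"
    and visc: "viscosity_solution H T u0 u"
    and t_in: "t \<in> {0<..<T}"
    and u_diff: "(\<lambda>z. u (fst z) (snd z)) differentiable (at (x, t))"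
    and lie: "lie_solution H t \<xi> \<eta> u\<xi>"
    and term_xi: "\<xi> t = x"
    and term_eta: "\<eta> t = grad (\<lambda>y. u y t) x"
    and term_u: "u\<xi> t = u x t"
  shows
    "((C\<^sub>1, K\<^sub>3) \<noteq> (0, 0) \<longrightarrow>
        norm (grad (\<lambda>y. u y t) x - \<eta> 0)
          \<le> (C\<^sub>1 * \<beta> / (C\<^sub>1 + K\<^sub>3) + norm (grad (\<lambda>y. u y t) x)) * (exp ((C\<^sub>1 + K\<^sub>3) * t) - 1) \<and>
        norm (grad (\<lambda>y. u y t) x - \<eta> 0)
          \<le> (C\<^sub>1 * \<beta> / (C\<^sub>1 + K\<^sub>3) + norm (\<eta> 0)) * (exp ((C\<^sub>1 + K\<^sub>3) * t) - 1) \<and>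
        norm (\<eta> 0) * exp (- (C\<^sub>1 + K\<^sub>3) * t) - C\<^sub>1 * \<beta> / (C\<^sub>1 + K\<^sub>3) * (1 - exp (- (C\<^sub>1 + K\<^sub>3) * t))
          \<le> norm (grad (\<lambda>y. u y t) x) \<and>
        norm (grad (\<lambda>y. u y t) x)
          \<le> norm (\<eta> 0) * exp ((C\<^sub>1 + K\<^sub>3) * t) + C\<^sub>1 * \<beta> / (C\<^sub>1 + K\<^sub>3) * (exp ((C\<^sub>1 + K\<^sub>3) * t) - 1)) \<and>
     (K\<^sub>3 = 0 \<longrightarrow>
        norm (\<eta> 0) * exp (- C\<^sub>1 * t) - \<beta> * (1 - exp (- C\<^sub>1 * t)) \<le> norm (grad (\<lambda>y. u y t) x) \<and>
        norm (grad (\<lambda>y. u y t) x) \<le> norm (\<eta> 0) * exp (C\<^sub>1 * t) + \<beta> * (exp (C\<^sub>1 * t) - 1)) \<and>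
     (\<beta> = 0 \<longrightarrow>
        norm (\<eta> 0) * exp (- (C\<^sub>1 + K\<^sub>3) * t) \<le> norm (grad (\<lambda>y. u y t) x) \<and>
        norm (grad (\<lambda>y. u y t) x) \<le> norm (\<eta> 0) * exp ((C\<^sub>1 + K\<^sub>3) * t)) \<and>
     (C\<^sub>1 = 0 \<longrightarrow>
        norm (\<eta> 0) * exp (- K\<^sub>3 * t) \<le> norm (grad (\<lambda>y. u y t) x) \<and>
        norm (grad (\<lambda>y. u y t) x) \<le> norm (\<eta> 0) * exp (K\<^sub>3 * t)) \<and>
     ((C\<^sub>1, K\<^sub>3) = (0, 0) \<longrightarrow> grad (\<lambda>y. u y t) x = \<eta> 0)"
proof -
  define a c where "a = C\<^sub>1 + K\<^sub>3" and "c = C\<^sub>1 * \<beta> / (C\<^sub>1 + K\<^sub>3)"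
  have \<beta>: "\<beta> \<ge> 0" using H1(2) by auto
  interpret affine_growth \<eta>
    "\<lambda>s. - DxH H (\<xi> s) s (u\<xi> s) (\<eta> s) - DuH H (\<xi> s) s (u\<xi> s) (\<eta> s) *\<^sub>R \<eta> s" a c t
    unfolding a_def c_def using t_in
    by (intro lie_solution_costate_affine_growth[OF H5 H1(1) \<beta> H1(3) H3 lie]) auto
  have up: "norm (\<eta> t) \<le> norm (\<eta> 0) * exp (a * t) + c * (exp (a * t) - 1)"
    using norm_exp_growth by (simp add: algebra_simps)
  have lo: "norm (\<eta> 0) * exp (- a * t) - c * (1 - exp (- a * t)) \<le> norm (\<eta> t)"
    using norm_exp_decay by (simp add: algebra_simps)
  note diff = norm_diff_exp_growth
  have "a = 0 \<Longrightarrow> \<eta> t = \<eta> 0" using diff(1) by simp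
  moreover have "C\<^sub>1 = 0 \<Longrightarrow> c = 0" "\<beta> = 0 \<Longrightarrow> c = 0" "K\<^sub>3 = 0 \<Longrightarrow> C\<^sub>1 \<noteq> 0 \<Longrightarrow> c = \<beta>"
    using H1(2) by (auto simp: c_def)
  moreover have "C\<^sub>1 = 0 \<Longrightarrow> a = K\<^sub>3" "K\<^sub>3 = 0 \<Longrightarrow> a = C\<^sub>1" "(C\<^sub>1, K\<^sub>3) = (0, 0) \<longleftrightarrow> a = 0"
    using H1(1) H3(1) by (auto simp: a_def)
  ultimately show ?thesis
    using up lo diff unfolding term_eta[symmetric] c_def[symmetric] unfolding a_def[symmetric] by auto
qed

end
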